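(* For every $X\in\mathfrak{W}'$ and every $l\ge1$, $\lambda(X)L_{z_l}-L_{z_l}\lambda(X)=XL_{z_l}+L_{x^l}X$ as maps on $\mathfrak{H}^1$.
   Context: Let $\mathfrak{H}=\mathbb{Q}\langle x,y\rangle$, $\mathfrak{H}^1=\mathbb{Q}+\mathfrak{H}y$, $\mathfrak{H}^1_n$ its homogeneous part of degree $n$; $L_w(w')=ww'$; products of operators denote composition. Let $z_k=x^{k-1}y$. The harmonic product $\ast$ on $\mathfrak{H}^1$ is the $\mathbb{Q}$-bilinear map with $1\ast w=w\ast1=w$ and $z_kw\ast z_lw'=z_k(w\ast z_lw')+z_l(z_kw\ast w')+z_{k+l}(w\ast w')$; $\mathcal{H}_w(v)=w\ast v$. $\mathfrak{W}$ is the $\mathbb{Q}$-span of the operators $\mathcal{H}_w$ ($w\in\mathfrak{H}^1$) on $\mathfrak{H}^1$; $\mathfrak{W}'$ is the $\mathbb{Q}$-span of the operators $L_{z_k}\mathcal{H}_w$ ($k\ge1$, $w\in\mathfrak{H}^1$) on $\mathfrak{H}^1$. The $L_{z_k}\mathcal{H}_w$ over distinct pairs $(k,w)$, $w$ a word, are linearly independent, and $\lambda:\mathfrak{W}'\to\mathfrak{W}$ is the $\mathbb{Q}$-linear map with $\lambda(L_{z_k}\mathcal{H}_w)=\mathcal{H}_{z_kw}$. *)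

theory Defs
  imports Complex_Main
begin

text \<open>Words over the alphabet {x, y}; an element of the free algebra
  H = Q<x,y> is a finitely supported function from words to rationals.\<close>

datatype letter = LX | LY

type_synonym nc = "letter list \<Rightarrow> rat"

definition Hspace :: "nc set" where
  "Hspace = {p. finite {w. p w \<noteq> 0}}"

definition H1word :: "letter list \<Rightarrow> bool" where
  "H1word w \<longleftrightarrow> w = [] \<or> last w = LY"

definition H1 :: "nc set" where
  "H1 = {p. p \<in> Hspace \<and> (\<forall>w. p w \<noteq> 0 \<longrightarrow> H1word w)}"

definition wd :: "letter list \<Rightarrow> nc" where
  "wd w = (\<lambda>u. if u = w then 1 else 0)"

definition z :: "nat \<Rightarrow> letter list" where
  "z k = replicate (k - 1) LX @ [LY]"

definition xpow :: "nat \<Rightarrow> letter list" where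
  "xpow l = replicate l LX"

definition Lw :: "letter list \<Rightarrow> nc \<Rightarrow> nc" where
  "Lw w p = (\<lambda>u. if take (length w) u = w then p (drop (length w) u) else 0)"

text \<open>words of H^1 are coded by index lists (k_1,...,k_n) = z_{k_1}...z_{k_n}\<close>
definition zword :: "nat list \<Rightarrow> letter list" where
  "zword ks = concat (map z ks)"

fun dec_aux :: "nat \<Rightarrow> letter list \<Rightarrow> nat list" where
  "dec_aux n [] = []"
| "dec_aux n (LX # w) = dec_aux (Suc n) w"
| "dec_aux n (LY # w) = Suc n # dec_aux 0 w"

definition dec :: "letter list \<Rightarrow> nat list" where
  "dec w = dec_aux 0 w"

text \<open>harmonic (stuffle) product of index words, as a list of terms with multiplicity:
  z_k u * z_l v = z_k (u * z_l v) + z_l (z_k u * v) + z_{k+l} (u * v)\<close>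
fun st :: "nat list \<Rightarrow> nat list \<Rightarrow> nat list list" where
  "st [] v = [v]"
| "st u [] = [u]"
| "st (k # u) (l # v) =
     map (Cons k) (st u (l # v)) @ map (Cons l) (st (k # u) v) @ map (Cons (k + l)) (st u v)"

text \<open>bilinear extension of the harmonic product (meaningful on H^1)\<close>
definition harm :: "nc \<Rightarrow> nc \<Rightarrow> nc" where
  "harm p q = (\<lambda>r. \<Sum>a\<in>{a. p a \<noteq> 0}. \<Sum>b\<in>{b. q b \<noteq> 0}.
      p a * q b * of_nat (count_list (map zword (st (dec a) (dec b))) r))"

definition Hop :: "letter list \<Rightarrow> nc \<Rightarrow> nc" where
  "Hop w v = harm (wd w) v"

text \<open>An element X of W' given by a finite linear combination
  X = sum_{(k,w) in S} c(k,w) L_{z_k} H_w  (k >= 1, w a word of H^1)\<close>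
definition Wop :: "(nat \<times> letter list) set \<Rightarrow> (nat \<times> letter list \<Rightarrow> rat) \<Rightarrow> nc \<Rightarrow> nc" where
  "Wop S c v = (\<lambda>u. \<Sum>(k, w)\<in>S. c (k, w) * Lw (z k) (Hop w v) u)"

text \<open>its image under lambda: sum_{(k,w) in S} c(k,w) H_{z_k w}\<close>
definition lam_op :: "(nat \<times> letter list) set \<Rightarrow> (nat \<times> letter list \<Rightarrow> rat) \<Rightarrow> nc \<Rightarrow> nc" where
  "lam_op S c v = (\<lambda>u. \<Sum>(k, w)\<in>S. c (k, w) * Hop (z k @ w) v u)"

end

theory Submission
  imports Defs
begin

(* Both sides of the identity are linear in X, so it suffices to
   treat a generator X = L_{z_k} H_w, where lambda(X) = H_{z_k w}.  Applied to v,
   the claim then reads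
       z_k w * z_l v - z_l (z_k w * v) = z_k (w * z_l v) + x^l z_k (w * v),
   which is the defining recursion of the harmonic product together with
   x^l z_k = z_{k+l}.  Since H_w is linear in its argument, it is enough to
   verify this recursion on the coefficients of the harmonic product of two words. *)

lemma Lw_support: "{u. Lw p v u \<noteq> 0} = (\<lambda>b. p @ b) ` {b. v b \<noteq> 0}"
proof (auto simp: Lw_def split: if_splits)
  fix u assume "take (length p) u = p" "v (drop (length p) u) \<noteq> 0"
  then show "u \<in> (@) p ` {b. v b \<noteq> 0}"
    by (intro image_eqI[of _ _ "drop (length p) u"]) (auto, metis append_take_drop_id)
qed

lemma Lw_append [simp]: "Lw p v (p @ b) = v b"
  by (simp add: Lw_def)

lemma Lw_lincomb: "Lw p (\<lambda>r. \<Sum>i\<in>I. c i * f i r) u = (\<Sum>i\<in>I. c i * Lw p (f i) u)"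
  by (simp add: Lw_def)

lemma take_append_prefix_iff:
  "take (length p + length q) u = p @ q \<longleftrightarrow>
   take (length p) u = p \<and> take (length q) (drop (length p) u) = q"
proof
  assume h: "take (length p + length q) u = p @ q"
  have "take (length p) (take (length p + length q) u) = p" by (simp add: h)
  moreover have "drop (length p) (take (length p + length q) u) = q" by (simp add: h)
  ultimately show "take (length p) u = p \<and> take (length q) (drop (length p) u) = q"
    by (simp add: min_def drop_take)
next
  assume "take (length p) u = p \<and> take (length q) (drop (length p) u) = q"
  then show "take (length p + length q) u = p @ q" by (simp add: take_add)
qed

lemma Lw_Lw: "Lw p (Lw q g) u = Lw (p @ q) g u"
  using take_append_prefix_iff[of p q u] by (auto simp: Lw_def add.commute)

lemma xpow_z: "k \<ge> 1 \<Longrightarrow> xpow l @ z k = z (k + l)"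
  by (simp add: xpow_def z_def replicate_add[symmetric] add.commute)

definition harm_coeff :: "letter list \<Rightarrow> letter list \<Rightarrow> letter list \<Rightarrow> rat" where
  "harm_coeff a b r = of_nat (count_list (map zword (st (dec a) (dec b))) r)"

lemma Hop_expand:
  assumes "finite {b. v b \<noteq> 0}"
  shows "Hop a v r = (\<Sum>b\<in>{b. v b \<noteq> 0}. v b * harm_coeff a b r)"
proof -
  have "{x. wd a x \<noteq> 0} = {a}" by (auto simp: wd_def)
  then show ?thesis by (simp add: Hop_def harm_def wd_def harm_coeff_def)
qed

lemma Hop_Lw_expand:
  assumes fin: "finite {b. v b \<noteq> 0}"
  shows "Hop a (Lw p v) r = (\<Sum>b\<in>{b. v b \<noteq> 0}. v b * harm_coeff a (p @ b) r)"
proof -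
  have "finite {u. Lw p v u \<noteq> 0}" using fin by (simp add: Lw_support)
  then have "Hop a (Lw p v) r
      = (\<Sum>b\<in>(\<lambda>b. p @ b) ` {b. v b \<noteq> 0}. Lw p v b * harm_coeff a b r)"
    by (simp only: Hop_expand Lw_support)
  also have "\<dots> = (\<Sum>b\<in>{b. v b \<noteq> 0}. v b * harm_coeff a (p @ b) r)"
    by (subst sum.reindex) (auto simp: inj_on_def)
  finally show ?thesis .
qed

lemma dec_aux_replicate: "dec_aux n (replicate m LX @ rest) = dec_aux (n + m) rest"
  by (induction m arbitrary: n) auto

lemma dec_z: "k \<ge> 1 \<Longrightarrow> dec (z k @ w) = k # dec w"
  by (simp add: dec_def z_def dec_aux_replicate)

lemma count_list_prefixed:
  "count_list (map (\<lambda>X. p @ f X) L) u =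
   (if take (length p) u = p then count_list (map f L) (drop (length p) u) else 0)"
  by (induction L) (auto simp: append_eq_conv_conj)

lemma count_prefix:
  "count_list (map (zword \<circ> (#) k) L) u =
   (if take (length (z k)) u = z k then count_list (map zword L) (drop (length (z k)) u) else 0)"
proof -
  have "map (zword \<circ> (#) k) L = map (\<lambda>X. z k @ zword X) L"
    by (induction L) (simp_all add: zword_def)
  then show ?thesis by (simp only: count_list_prefixed)
qed

lemma harm_coeff_recursion:
  assumes "k \<ge> 1" "l \<ge> 1"
  shows "harm_coeff (z k @ w) (z l @ b) u = Lw (z k) (harm_coeff w (z l @ b)) u
      + Lw (z l) (harm_coeff (z k @ w) b) u + Lw (z (k + l)) (harm_coeff w b) u"
  using assms by (simp add: harm_coeff_def dec_z count_prefix Lw_def)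

lemma generator_identity:
  assumes k: "k \<ge> 1" and l: "l \<ge> 1" and fin: "finite {b. v b \<noteq> 0}"
  shows "Hop (z k @ w) (Lw (z l) v) u - Lw (z l) (Hop (z k @ w) v) u
       = Lw (z k) (Hop w (Lw (z l) v)) u + Lw (xpow l) (Lw (z k) (Hop w v)) u"
proof -
  define V where "V = {b. v b \<noteq> 0}"
  have Hop_V: "Hop a v = (\<lambda>r. \<Sum>b\<in>V. v b * harm_coeff a b r)" for a
    using Hop_expand[OF fin] by (auto simp: V_def)
  have HopL_V: "Hop a (Lw (z l) v) = (\<lambda>r. \<Sum>b\<in>V. v b * harm_coeff a (z l @ b) r)" for a
    using Hop_Lw_expand[OF fin] by (auto simp: V_def)
  have shift: "Lw (xpow l) (Lw (z k) f) u = Lw (z (k + l)) f u" for f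
    by (simp add: Lw_Lw xpow_z[OF k])
  show ?thesis
    unfolding Hop_V HopL_V Lw_lincomb shift
    by (simp add: harm_coeff_recursion[OF k l] sum.distrib distrib_left
        sum_subtractf[symmetric])
qed

theorem mainTheorem11:
  fixes S :: "(nat \<times> letter list) set" and c :: "nat \<times> letter list \<Rightarrow> rat"
    and l :: nat and v :: nc
  assumes "finite S"
    and "\<forall>(k, w)\<in>S. k \<ge> 1 \<and> H1word w"
    and "l \<ge> 1"
    and "v \<in> H1"
  shows "(\<lambda>u. lam_op S c (Lw (z l) v) u - Lw (z l) (lam_op S c v) u)
       = (\<lambda>u. Wop S c (Lw (z l) v) u + Lw (xpow l) (Wop S c v) u)"
proof
  fix u
  have fin: "finite {b. v b \<noteq> 0}" using assms(4) by (simp add: H1_def Hspace_def)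
  have term_identity: "c (k, w) * Hop (z k @ w) (Lw (z l) v) u
        - c (k, w) * Lw (z l) (Hop (z k @ w) v) u
      = c (k, w) * Lw (z k) (Hop w (Lw (z l) v)) u
        + c (k, w) * Lw (xpow l) (Lw (z k) (Hop w v)) u" if "(k, w) \<in> S" for k w
    using generator_identity[OF _ assms(3) fin, of k w u] that assms(2)
    by (auto simp: algebra_simps)
  show "lam_op S c (Lw (z l) v) u - Lw (z l) (lam_op S c v) u
      = Wop S c (Lw (z l) v) u + Lw (xpow l) (Wop S c v) u"
    unfolding lam_op_def Wop_def
    by (simp add: case_prod_beta Lw_lincomb sum_subtractf[symmetric] sum.distrib[symmetric])
      (rule sum.cong, auto simp: term_identity)
qed

end
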